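(* Let $A$ be a $C^*$-algebra with real rank zero and let $E$ be a finite dimensional $C^*$-subalgebra of $A$ with the same unit as $A$. Then $B=A\cap E'$ also has real rank zero.
   Context: $E'$ denotes the commutant of $E$, so $A\cap E'=\{a\in A: ae=ea\text{ for all }e\in E\}$. *)

theory Defs
  imports "HOL-Analysis.Analysis"
begin

class cstar_algebra = real_normed_algebra_1 + banach +
  fixes scaleC :: "complex \<Rightarrow> 'a \<Rightarrow> 'a"
    and adj :: "'a \<Rightarrow> 'a"
  assumes scaleC_add_right: "scaleC c (x + y) = scaleC c x + scaleC c y"
    and scaleC_add_left: "scaleC (c + d) x = scaleC c x + scaleC d x"
    and scaleC_scaleC: "scaleC c (scaleC d x) = scaleC (c * d) x"
    and scaleC_one: "scaleC 1 x = x"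
    and scaleR_scaleC: "scaleR r x = scaleC (complex_of_real r) x"
    and scaleC_mult_left: "scaleC c x * y = scaleC c (x * y)"
    and scaleC_mult_right: "x * scaleC c y = scaleC c (x * y)"
    and norm_scaleC: "norm (scaleC c x) = cmod c * norm x"
    and adj_adj: "adj (adj x) = x"
    and adj_add: "adj (x + y) = adj x + adj y"
    and adj_scaleC: "adj (scaleC c x) = scaleC (cnj c) (adj x)"
    and adj_mult: "adj (x * y) = adj y * adj x"
    and cstar_identity: "norm (adj x * x) = (norm x)\<^sup>2"

definition cstar_subalgebra :: "'a::cstar_algebra set \<Rightarrow> bool" where
  "cstar_subalgebra E \<longleftrightarrow>
     0 \<in> E \<and> (\<forall>x\<in>E. \<forall>y\<in>E. x + y \<in> E \<and> x * y \<in> E) \<and>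
     (\<forall>c. \<forall>x\<in>E. scaleC c x \<in> E) \<and> (\<forall>x\<in>E. adj x \<in> E) \<and> closed E"

definition cspan :: "'a::cstar_algebra set \<Rightarrow> 'a set" where
  "cspan F = {\<Sum>x\<in>F. scaleC (c x) x | c. True}"

definition finite_dim :: "'a::cstar_algebra set \<Rightarrow> bool" where
  "finite_dim E \<longleftrightarrow> (\<exists>F. finite F \<and> E \<subseteq> cspan F)"

definition commutant :: "'a::cstar_algebra set \<Rightarrow> 'a set" where
  "commutant E = {a. \<forall>e\<in>E. a * e = e * a}"

text \<open>Real rank zero (Brown--Pedersen) for a unital C*-algebra S with unit 1:
  the invertible self-adjoint elements of S are dense in the self-adjoint
  elements of S (invertibility taken inside S).\<close>
definition real_rank_zero :: "'a::cstar_algebra set \<Rightarrow> bool" where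
  "real_rank_zero S \<longleftrightarrow>
     (\<forall>x\<in>S. adj x = x \<longrightarrow>
        (\<forall>\<epsilon>>0. \<exists>y\<in>S. adj y = y \<and> (\<exists>z\<in>S. y * z = 1 \<and> z * y = 1) \<and>
                        norm (x - y) < \<epsilon>))"

end

theory Submission
  imports Defs "HOL-Computational_Algebra.Fundamental_Theorem_Algebra"
begin

text \<open>
  A partition of unity \<open>Q\<close> into projections of \<open>E\<close> with as many members as possible (finite
  dimension bounds their number) consists of minimal projections \<open>q\<close>. Self-adjoint elements of \<open>E\<close>
  are annihilated by polynomials, so they have finitely many real eigenvalues whose spectral
  projections lie in \<open>E\<close>; this gives \<open>q E q = \<complex> q\<close>, and two members of \<open>Q\<close> are
  Murray--von Neumann equivalent in \<open>E\<close> as soon as \<open>q E q' \<noteq> 0\<close>. Fixing a representative \<open>r\<close> of each class and partial isometries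
  \<open>w\<^sub>q \<in> E\<close> from \<open>r\<close> to \<open>q\<close>, the map sending a family \<open>T r \<in> r A r\<close> to
  \<open>\<Sum>\<^sub>q w\<^sub>q T(r) w\<^sub>q\<^sup>*\<close> is a unital \<open>*\<close>-homomorphism onto the commutant \<open>A \<inter> E'\<close>,
  with \<open>x\<close> the image of \<open>r x r\<close>.

  So it suffices that corners \<open>r A r\<close> of a real rank zero algebra have real rank zero. Given
  self-adjoint \<open>b \<in> r A r\<close>, approximate \<open>b + (1 - r)\<close> by an invertible self-adjoint \<open>y\<close>. The
  \<open>(1 - r)\<close>-block of \<open>y\<close> is close to \<open>1 - r\<close>, hence invertible in its corner, and the Schur
  complement of that block is invertible in \<open>r A r\<close> and close to \<open>b\<close>.
\<close>

lemma adj_zero [simp]: "adj 0 = (0::'a::cstar_algebra)"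
  using adj_add[of 0 0] by simp

lemma adj_minus [simp]: "adj (- x) = - adj (x::'a::cstar_algebra)"
  using adj_add[of x "-x"] by (intro minus_unique[symmetric]) simp

lemma adj_diff: "adj (x - y) = adj x - adj (y::'a::cstar_algebra)"
  using adj_add[of x "-y"] by simp

lemma adj_one [simp]: "adj 1 = (1::'a::cstar_algebra)"
  using adj_mult[of "adj 1" 1] by (simp add: adj_adj)

lemma adj_sum: "adj (sum f S) = (\<Sum>i\<in>S. adj (f i :: 'a::cstar_algebra))"
  by (induction S rule: infinite_finite_induct) (auto simp: adj_add)

lemma scaleC_zero_left [simp]: "scaleC 0 x = (0::'a::cstar_algebra)"
  using scaleC_add_left[of 0 0 x] by simp

lemma scaleC_zero_right [simp]: "scaleC c 0 = (0::'a::cstar_algebra)"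
  using scaleC_add_right[of c 0 0] by simp

lemma scaleC_minus_right: "scaleC c (- x) = - scaleC c (x::'a::cstar_algebra)"
  using scaleC_add_right[of c x "-x"] by (intro minus_unique[symmetric]) simp

lemma scaleC_minus_left: "scaleC (- c) x = - scaleC c (x::'a::cstar_algebra)"
  using scaleC_add_left[of c "-c" x] by (intro minus_unique[symmetric]) simp

lemma scaleC_diff_right: "scaleC c (x - y) = scaleC c x - scaleC c (y::'a::cstar_algebra)"
  using scaleC_add_right[of c x "-y"] by (simp add: scaleC_minus_right)

lemma scaleC_diff_left: "scaleC (c - d) x = scaleC c x - scaleC d (x::'a::cstar_algebra)"
  using scaleC_add_left[of c "-d" x] by (simp add: scaleC_minus_left)

lemma adj_scaleR: "adj (scaleR k x) = scaleR k (adj (x::'a::cstar_algebra))"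
  by (simp add: scaleR_scaleC adj_scaleC)

lemma norm_adj [simp]: "norm (adj x) = norm (x::'a::cstar_algebra)"
proof -
  have le: "norm y \<le> norm (adj y)" for y :: 'a
  proof (cases "y = 0")
    case False
    have "norm y * norm y = norm (adj y * y)" by (simp add: cstar_identity power2_eq_square)
    also have "\<dots> \<le> norm (adj y) * norm y" by (rule norm_mult_ineq)
    finally show ?thesis using False by simp
  qed simp
  show ?thesis using le[of x] le[of "adj x"] by (simp add: adj_adj)
qed

lemma adj_mult_self_eq_0_iff: "adj x * x = 0 \<longleftrightarrow> x = (0::'a::cstar_algebra)"
  using cstar_identity[of x] by auto

lemma scaleC_eq_0_iff: "scaleC c x = 0 \<longleftrightarrow> c = 0 \<or> x = (0::'a::cstar_algebra)"
  by (metis norm_eq_zero norm_scaleC mult_eq_0_iff)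

lemma scaleC_right_imp_eq: "scaleC a x = scaleC b x \<Longrightarrow> x \<noteq> (0::'a::cstar_algebra) \<Longrightarrow> a = b"
  by (metis eq_iff_diff_eq_0 scaleC_diff_left scaleC_eq_0_iff)

definition projection :: "'a::cstar_algebra \<Rightarrow> bool" where
  "projection p \<longleftrightarrow> adj p = p \<and> p * p = p"

lemma norm_projection_le_1: "projection p \<Longrightarrow> norm p \<le> 1"
  using cstar_identity[of p] by (auto simp: projection_def power2_eq_square)

lemma projection_one_minus: "projection p \<Longrightarrow> projection (1 - p)"
  by (simp add: projection_def adj_diff algebra_simps)

lemma projection_mult_commute: "projection q \<Longrightarrow> projection r \<Longrightarrow> r * q = r \<Longrightarrow> q * r = r"
  by (metis adj_mult projection_def)

lemma norm_projection_mult_projection_le: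
  fixes p q x :: "'a::cstar_algebra"
  assumes "projection p" "projection q"
  shows "norm (p * x * q) \<le> norm x"
proof -
  have "norm (p * x * q) \<le> norm p * norm x * norm q"
    by (metis norm_mult_ineq mult_right_mono norm_ge_zero order_trans)
  also have "\<dots> \<le> 1 * norm x * 1"
    using assms by (intro mult_mono) (auto simp: norm_projection_le_1)
  finally show ?thesis by simp
qed

lemma inverse_commute:
  fixes x g p :: "'a::monoid_mult"
  assumes "x * g = 1" "g * x = 1" "p * x = x * p"
  shows "p * g = g * p"
  by (metis assms mult.assoc mult_1_left mult_1_right)

lemma adj_inverse_selfadjoint:
  fixes x g :: "'a::cstar_algebra"
  assumes "adj x = x" "x * g = 1" "g * x = 1"
  shows "adj g = g"
  by (metis adj_mult adj_one assms mult.assoc mult_1_left mult_1_right)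

section \<open>Corners of real rank zero algebras\<close>

lemma neumann_inverse:
  fixes u :: "'a::{real_normed_algebra_1, banach}"
  assumes "norm u < 1"
  shows "\<exists>g. (1 - u) * g = 1 \<and> g * (1 - u) = 1 \<and> norm g \<le> 1 / (1 - norm u)"
proof -
  have norm_pow: "norm (u ^ n) \<le> norm u ^ n" for n by (rule norm_power_ineq)
  have sum_norm_pow: "summable (\<lambda>n. norm u ^ n)" using assms by (intro summable_geometric) simp
  have sum_norm: "summable (\<lambda>n. norm (u ^ n))"
    by (rule summable_comparison_test'[OF sum_norm_pow]) (use norm_pow in auto)
  have sum_pow: "summable (\<lambda>n. u ^ n)" using sum_norm by (rule summable_norm_cancel)
  define g where "g = (\<Sum>n. u ^ n)"
  have telescope: "(\<lambda>n. u ^ n - u ^ Suc n) sums 1"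
    using telescope_sums'[OF LIMSEQ_power_zero[OF assms]] by simp
  have "(1 - u) * g = (\<Sum>n. u ^ n - u ^ Suc n)"
    unfolding g_def suminf_mult[OF sum_pow, symmetric] by (simp add: algebra_simps)
  moreover have "g * (1 - u) = (\<Sum>n. u ^ n - u ^ Suc n)"
    unfolding g_def suminf_mult2[OF sum_pow] by (simp add: algebra_simps power_commutes)
  moreover have "norm g \<le> (\<Sum>n. norm u ^ n)"
    unfolding g_def
    by (rule order_trans[OF summable_norm[OF sum_norm] suminf_le[OF norm_pow sum_norm sum_norm_pow]])
  ultimately show ?thesis
    using telescope assms by (intro exI[of _ g]) (simp add: sums_iff suminf_geometric)
qed

text \<open>\<open>d\<close> is \<open>p\<close> times the invertible element \<open>1 - (p - d)\<close>, which commutes with \<open>p\<close>.\<close>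

lemma corner_inverse_near_projection:
  fixes p d :: "'a::cstar_algebra"
  assumes p: "projection p" and d: "p * d = d" "d * p = d" "adj d = d"
    and near: "norm (p - d) \<le> 1/2"
  shows "\<exists>d'. d * d' = p \<and> d' * d = p \<and> adj d' = d' \<and> norm d' \<le> 2"
proof -
  have pp: "p * p = p" "adj p = p" using p by (auto simp: projection_def)
  define u where "u = 1 - (p - d)"
  obtain G where uG: "u * G = 1" and Gu: "G * u = 1" and normG: "norm G \<le> 1 / (1 - norm (p - d))"
    using neumann_inverse[of "p - d"] near unfolding u_def by auto
  have pu: "p * u = u * p" and d_eq: "d = p * u"
    using pp d by (simp_all add: u_def algebra_simps)
  have pG: "p * G = G * p" by (rule inverse_commute[OF uG Gu pu])
  have Gsa: "adj G = G"
    by (rule adj_inverse_selfadjoint[OF _ uG Gu]) (simp add: u_def adj_diff pp d)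
  have "1 / (1 - norm (p - d)) \<le> 2" using near by (simp add: field_simps)
  then have "norm (p * G) \<le> 2"
    using norm_mult_ineq[of p G] norm_projection_le_1[OF p] normG
    by (smt (verit) mult_left_le_one_le norm_ge_zero)
  moreover have "d * (p * G) = p"
    by (metis d_eq pu pG uG mult.assoc pp(1) mult_1_right)
  moreover have "(p * G) * d = p"
    by (metis d_eq pG Gu mult.assoc pp(1) mult_1_right)
  moreover have "adj (p * G) = p * G" by (simp add: adj_mult Gsa pp pG)
  ultimately show ?thesis by blast
qed

text \<open>\<open>s\<close> is the Schur complement of the \<open>(1 - r)\<close>-block of \<open>y\<close>; its inverse in the corner
  \<open>r A r\<close> is the \<open>r\<close>-block of \<open>y\<^sup>-\<^sup>1\<close>.\<close>

lemma schur_complement_inverse: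
  fixes r y g d' :: "'a::ring_1"
  assumes rr: "r * r = r" and yg: "y * g = 1" and gy: "g * y = 1"
    and dd': "(1 - r) * y * (1 - r) * d' = 1 - r" and d'd: "d' * ((1 - r) * y * (1 - r)) = 1 - r"
  defines "s \<equiv> r * y * r - r * y * (1 - r) * d' * ((1 - r) * y * r)"
  shows "s * (r * g * r) = r" and "(r * g * r) * s = r"
proof -
  define r' where "r' = 1 - r"
  have r': "r * r' = 0" "r' * r = 0" "r' * r' = r'" "r + r' = 1"
    using rr by (simp_all add: r'_def algebra_simps)
  have split: "x * z = x * r * z + x * r' * z" for x z :: 'a
    using r'(4) by (metis distrib_left distrib_right mult.assoc mult_1_right)
  have absorb: "r * (r * x) = r * x" "r' * (r' * x) = r' * x" for x
    using rr r'(3) by (metis mult.assoc)+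
  have r'gr: "r' * g * r = - (d' * (r' * y * r) * (r * g * r))"
  proof -
    have "0 = d' * (r' * (y * g) * r)" using yg r' by simp
    also have "\<dots> = d' * (r' * y * r) * (r * g * r) + (d' * (r' * y * r')) * (r' * g * r)"
      using split[of "r' * y" "g * r"] absorb by (simp add: algebra_simps)
    also have "d' * (r' * y * r') = r'" using d'd by (simp add: r'_def)
    finally show ?thesis using r' absorb by (simp add: mult.assoc eq_neg_iff_add_eq_0 add.commute)
  qed
  have rgr': "r * g * r' = - ((r * g * r) * (r * y * r') * d')"
  proof -
    have "0 = r * (g * y) * r' * d'" using gy r' by simp
    also have "\<dots> = (r * g * r) * (r * y * r') * d' + (r * g * r') * ((r' * y * r') * d')"
      using split[of "r * g" "y * r'"] absorb by (simp add: algebra_simps)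
    also have "(r' * y * r') * d' = r'" using dd' by (simp add: r'_def)
    finally show ?thesis using r' absorb by (simp add: mult.assoc eq_neg_iff_add_eq_0 add.commute)
  qed
  have "r = r * (y * g) * r" using yg rr by simp
  also have "\<dots> = (r * y * r) * (r * g * r) + (r * y * r') * (r' * g * r)"
    using split[of "r * y" "g * r"] absorb by (simp add: mult.assoc)
  also have "\<dots> = s * (r * g * r)"
    unfolding r'gr by (simp add: s_def r'_def algebra_simps)
  finally show "s * (r * g * r) = r" ..
  have "r = r * (g * y) * r" using gy rr by simp
  also have "\<dots> = (r * g * r) * (r * y * r) + (r * g * r') * (r' * y * r)"
    using split[of "r * g" "y * r"] absorb by (simp add: mult.assoc)
  also have "\<dots> = (r * g * r) * s"
    unfolding rgr' by (simp add: s_def r'_def algebra_simps)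
  finally show "(r * g * r) * s = r" ..
qed

lemma corner_blocks_near:
  fixes r b y :: "'a::cstar_algebra"
  assumes r: "projection r" and b: "r * b = b" "b * r = b" and near: "norm (b + (1 - r) - y) < \<eta>"
  shows "norm (b - r * y * r) < \<eta>" and "norm ((1 - r) - (1 - r) * y * (1 - r)) < \<eta>"
    and "norm (r * y * (1 - r)) < \<eta>"
proof -
  define r' where "r' = 1 - r"
  have rr: "r * r = r" using r by (simp add: projection_def)
  have r': "projection r'" "r * r' = 0" "r' * r' = r'" "b * r' = 0" "r' * b = 0"
    using r rr b by (simp_all add: r'_def projection_one_minus algebra_simps)
  have absorb: "r * (r * x) = r * x" "r' * (r' * x) = r' * x" "r * (r' * x) = 0"
    "r * (b * x) = b * x" "b * (r' * x) = 0" "r' * (b * x) = 0" for x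
    using rr r' b by (metis mult.assoc mult_zero_left)+
  have "r * (b + r' - y) * r = b - r * y * r" using r' b rr absorb by (simp add: algebra_simps)
  then show "norm (b - r * y * r) < \<eta>"
    using norm_projection_mult_projection_le[OF r r, of "b + r' - y"] near r'_def by simp
  have "r' * (b + r' - y) * r' = r' - r' * y * r'" using r' absorb by (simp add: algebra_simps)
  then show "norm ((1 - r) - (1 - r) * y * (1 - r)) < \<eta>"
    using norm_projection_mult_projection_le[OF r'(1) r'(1), of "b + r' - y"] near r'_def by simp
  have "r * (b + r' - y) * r' = - (r * y * r')" using r' b absorb by (simp add: algebra_simps)
  then show "norm (r * y * (1 - r)) < \<eta>"
    using norm_projection_mult_projection_le[OF r r'(1), of "b + r' - y"] near r'_def by simp
qed

lemma corner_real_rank_zero: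
  fixes r b :: "'a::cstar_algebra"
  assumes rr0: "real_rank_zero (UNIV::'a set)" and r: "projection r"
    and b: "adj b = b" "r * b = b" "b * r = b" and \<delta>: "\<delta> > 0"
  shows "\<exists>s s'. adj s = s \<and> r * s = s \<and> s * r = s \<and> r * s' = s' \<and> s' * r = s'
            \<and> s * s' = r \<and> s' * s = r \<and> norm (b - s) < \<delta>"
proof -
  define r' where "r' = 1 - r"
  have rr: "r * r = r" "adj r = r" using r by (auto simp: projection_def)
  have r': "projection r'" "r * r' = 0" "r' * r = 0" "r' * r' = r'" "adj r' = r'"
    using r rr by (simp_all add: r'_def projection_one_minus algebra_simps adj_diff)
  have absorb: "r * (r * x) = r * x" "r' * (r' * x) = r' * x" "r * (r' * x) = 0" "r' * (r * x) = 0" for x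
    using rr r' by (metis mult.assoc mult_zero_left)+
  define \<eta> where "\<eta> = min (1/2) (\<delta>/4)"
  have \<eta>: "\<eta> > 0" "\<eta> \<le> 1/2" "\<eta> \<le> \<delta>/4" using \<delta> by (auto simp: \<eta>_def)
  have "adj (b + r') = b + r'" using b r' by (simp add: adj_add)
  then obtain y where ysa: "adj y = y" and "\<exists>g. y * g = 1 \<and> g * y = 1"
      and near: "norm (b + r' - y) < \<eta>"
    using rr0 \<eta>(1) unfolding real_rank_zero_def by (metis UNIV_I norm_minus_commute)
  then obtain g where yg: "y * g = 1" and gy: "g * y = 1" by blast
  define a where "a = r * y * r"
  define c where "c = r * y * r'"
  define d where "d = r' * y * r'"
  have near_a: "norm (b - a) < \<eta>" and near_d: "norm (r' - d) < \<eta>" and small_c: "norm c < \<eta>"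
    using corner_blocks_near[OF r b(2,3)] near unfolding a_def c_def d_def r'_def by blast+
  have adj_c: "adj c = r' * y * r" using ysa r' rr by (simp add: c_def adj_mult mult.assoc)
  have "r' * d = d" "d * r' = d" "adj d = d"
    using r' ysa absorb by (simp_all add: d_def mult.assoc adj_mult)
  then obtain d' where dd': "d * d' = r'" and d'd: "d' * d = r'" and d'sa: "adj d' = d'"
      and norm_d': "norm d' \<le> 2"
    using corner_inverse_near_projection[OF r'(1)] near_d \<eta>(2) by fastforce
  define s where "s = a - c * d' * adj c"
  have inv: "s * (r * g * r) = r" "(r * g * r) * s = r"
    using schur_complement_inverse[OF rr(1) yg gy, of d'] dd' d'd
    unfolding s_def adj_c unfolding a_def c_def d_def r'_def by simp_all
  have "adj s = s" using ysa rr d'sa by (simp add: s_def a_def adj_diff adj_mult adj_adj mult.assoc)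
  moreover have "r * s = s" "s * r = s" "r * (r * g * r) = r * g * r" "(r * g * r) * r = r * g * r"
    using rr r' absorb unfolding s_def adj_c by (simp_all add: a_def c_def algebra_simps)
  moreover have "norm (b - s) < \<delta>"
  proof -
    have "norm (c * d' * adj c) \<le> norm c * norm d' * norm (adj c)"
      by (metis norm_mult_ineq mult_right_mono norm_ge_zero order_trans)
    also have "\<dots> \<le> \<eta> * 2 * \<eta>"
      using small_c norm_d' \<eta> by (intro mult_mono) auto
    also have "\<dots> \<le> \<eta>" using \<eta> by (simp add: mult_le_cancel_left1)
    finally have "norm (c * d' * adj c) \<le> \<eta>" .
    then have "norm (b - s) < 2 * \<eta>"
      using norm_triangle_ineq[of "b - a" "c * d' * adj c"] near_a by (simp add: s_def algebra_simps)
    then show ?thesis using \<eta> by linarith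
  qed
  ultimately show ?thesis using inv by blast
qed

section \<open>Polynomial functional calculus\<close>

definition poly_calc :: "complex poly \<Rightarrow> 'a::cstar_algebra \<Rightarrow> 'a" where
  "poly_calc p h = fold_coeffs (\<lambda>a acc. scaleC a 1 + h * acc) p 0"

lemma poly_calc_0 [simp]: "poly_calc 0 h = 0"
  by (simp add: poly_calc_def)

lemma poly_calc_pCons [simp]: "poly_calc (pCons a p) h = scaleC a 1 + h * poly_calc p h"
  by (cases "p = 0"; cases "a = 0") (simp_all add: poly_calc_def)

lemma poly_calc_add [simp]: "poly_calc (p + q) h = poly_calc p h + poly_calc q h"
proof (induction p arbitrary: q rule: pCons_induct)
  case (pCons a p)
  then show ?case by (cases q) (simp add: scaleC_add_left algebra_simps)
qed simp

lemma poly_calc_smult [simp]: "poly_calc (smult c p) h = scaleC c (poly_calc p h)"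
  by (induction p rule: pCons_induct)
     (simp_all add: scaleC_add_right scaleC_scaleC scaleC_mult_right)

lemma poly_calc_diff [simp]: "poly_calc (p - q) h = poly_calc p h - poly_calc q h"
  using poly_calc_add[of "p - q" q h] by (simp add: algebra_simps)

lemma poly_calc_mult [simp]: "poly_calc (p * q) h = poly_calc p h * poly_calc q h"
  by (induction p rule: pCons_induct)
     (simp_all add: algebra_simps scaleC_mult_left)

lemma poly_calc_one [simp]: "poly_calc 1 h = 1"
  by (simp add: one_pCons scaleC_one)

lemma poly_calc_linear: "poly_calc [:- z, 1:] h = h - scaleC z 1"
  by (simp add: scaleC_one scaleC_minus_left)

lemma poly_calc_monom: "poly_calc (monom c k) h = scaleC c (h ^ k)"
  by (induction k) (simp_all add: monom_0 monom_Suc scaleC_mult_right)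

lemma poly_calc_sum: "poly_calc (sum f S) h = (\<Sum>i\<in>S. poly_calc (f i) h)"
  by (induction S rule: infinite_finite_induct) auto

lemma poly_calc_commute:
  assumes "x * h = h * x"
  shows "x * poly_calc p h = poly_calc p h * x"
proof (induction p rule: pCons_induct)
  case (pCons a p)
  have "x * poly_calc (pCons a p) h = scaleC a x + (x * h) * poly_calc p h"
    by (simp add: algebra_simps scaleC_mult_right)
  also have "\<dots> = scaleC a x + h * (x * poly_calc p h)" using assms by (simp add: mult.assoc)
  also have "\<dots> = poly_calc (pCons a p) h * x"
    using pCons by (simp add: algebra_simps scaleC_mult_left)
  finally show ?case .
qed simp

lemma poly_calc_eigenvector:
  assumes "h * x = scaleC l x"
  shows "poly_calc p h * x = scaleC (poly p l) x"
proof (induction p rule: pCons_induct)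
  case (pCons a p)
  have "poly_calc (pCons a p) h * x = scaleC a x + h * (poly_calc p h * x)"
    by (simp add: algebra_simps scaleC_mult_left)
  also have "\<dots> = scaleC (poly (pCons a p) l) x"
    using pCons assms by (simp add: scaleC_mult_right scaleC_scaleC scaleC_add_left algebra_simps)
  finally show ?case .
qed simp

lemma adj_poly_calc:
  assumes "adj h = h"
  shows "adj (poly_calc p h) = poly_calc (map_poly cnj p) h"
proof (induction p rule: pCons_induct)
  case (pCons a p)
  have "poly_calc (map_poly cnj p) h * h = h * poly_calc (map_poly cnj p) h"
    by (rule poly_calc_commute[symmetric]) simp
  then show ?case
    using pCons assms by (simp add: map_poly_pCons adj_add adj_mult adj_scaleC)
qed simp

definition real_poly :: "complex poly \<Rightarrow> bool" where
  "real_poly p \<longleftrightarrow> (\<forall>i. coeff p i \<in> \<real>)"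

lemma real_poly_prod: "(\<And>i. i \<in> S \<Longrightarrow> real_poly (f i)) \<Longrightarrow> real_poly (prod f S)"
  by (induction S rule: infinite_finite_induct)
     (auto simp: real_poly_def coeff_1 coeff_mult intro!: sum_in_Reals)

lemma real_poly_smult: "c \<in> \<real> \<Longrightarrow> real_poly p \<Longrightarrow> real_poly (smult c p)"
  unfolding real_poly_def by auto

lemma real_poly_linear: "z \<in> \<real> \<Longrightarrow> real_poly [:- z, 1:]"
  unfolding real_poly_def by (auto simp: coeff_pCons split: nat.splits)

lemma map_poly_cnj_real_poly: "real_poly p \<Longrightarrow> map_poly cnj p = p"
  unfolding real_poly_def by (intro poly_eqI) (simp add: coeff_map_poly Reals_cnj_iff)

lemma selfadjoint_poly_calc: "adj h = h \<Longrightarrow> real_poly p \<Longrightarrow> adj (poly_calc p h) = poly_calc p h"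
  by (simp add: adj_poly_calc map_poly_cnj_real_poly)

lemma selfadjoint_eigenvalue_real:
  fixes h x :: "'a::cstar_algebra"
  assumes h: "adj h = h" and eigen: "h * x = scaleC z x" and x: "x \<noteq> 0"
  shows "z \<in> \<real>"
proof -
  have "adj x * h = scaleC (cnj z) (adj x)"
    using arg_cong[OF eigen, of adj] h by (simp add: adj_mult adj_scaleC)
  then have "scaleC (cnj z) (adj x * x) = adj x * (h * x)"
    by (simp add: scaleC_mult_left flip: mult.assoc)
  also have "\<dots> = scaleC z (adj x * x)" by (simp add: eigen scaleC_mult_right)
  finally have "cnj z = z" using x by (simp add: scaleC_right_imp_eq adj_mult_self_eq_0_iff)
  then show ?thesis by (simp add: Reals_cnj_iff)
qed

lemma selfadjoint_mult_mult_eq_0: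
  fixes k x :: "'a::cstar_algebra"
  assumes "adj k = k" and "k * (k * x) = 0"
  shows "k * x = 0"
proof -
  have "adj (k * x) * (k * x) = adj x * (k * (k * x))"
    using assms(1) by (simp add: adj_mult mult.assoc)
  then show ?thesis using assms(2) by (simp add: adj_mult_self_eq_0_iff)
qed

lemma annihilator_absorb_linear_factor:
  fixes h :: "'a::cstar_algebra"
  assumes h: "adj h = h" and L: "finite L" "L \<subseteq> \<real>"
    and annih: "poly_calc ((\<Prod>l\<in>L. [:- l, 1:]) * ([:- z, 1:] * g)) h = 0"
  shows "\<exists>L'. finite L' \<and> L' \<subseteq> \<real> \<and> poly_calc ((\<Prod>l\<in>L'. [:- l, 1:]) * g) h = 0"
proof -
  define D where "D = poly_calc ((\<Prod>l\<in>L. [:- l, 1:]) * g) h"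
  have "(\<Prod>l\<in>L. [:- l, 1:]) * ([:- z, 1:] * g) = [:- z, 1:] * ((\<Prod>l\<in>L. [:- l, 1:]) * g)"
    by (simp only: mult_ac)
  then have kernel: "(h - scaleC z 1) * D = 0"
    using annih by (simp only: D_def poly_calc_mult[of "[:- z, 1:]"] poly_calc_linear)
  show ?thesis
  proof (cases "D = 0")
    case True
    then show ?thesis using L by (auto simp: D_def)
  next
    case False
    then have z: "z \<in> \<real>"
      using selfadjoint_eigenvalue_real[OF h _ False] kernel
      by (simp add: algebra_simps scaleC_mult_left)
    show ?thesis
    proof (cases "z \<in> L")
      case True
      \<comment> \<open>a repeated root can be dropped, since \<open>(h - z)\<^sup>2 x = 0\<close> forces \<open>(h - z) x = 0\<close>\<close>
      have "(\<Prod>l\<in>L. [:- l, 1:]) * g = [:- z, 1:] * ((\<Prod>l\<in>L - {z}. [:- l, 1:]) * g)"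
        using True L by (simp add: prod.remove mult_ac)
      then have "D = (h - scaleC z 1) * poly_calc ((\<Prod>l\<in>L - {z}. [:- l, 1:]) * g) h"
        by (simp only: D_def poly_calc_mult[of "[:- z, 1:]"] poly_calc_linear)
      moreover have "adj (h - scaleC z 1) = h - scaleC z 1"
        using h z by (simp add: adj_diff adj_scaleC Reals_cnj_iff)
      ultimately have "D = 0" using kernel selfadjoint_mult_mult_eq_0 by metis
      then show ?thesis using L by (auto simp: D_def)
    next
      case False
      then have "(\<Prod>l\<in>insert z L. [:- l, 1:]) = [:- z, 1:] * (\<Prod>l\<in>L. [:- l, 1:])"
        using L by simp
      then have "(\<Prod>l\<in>insert z L. [:- l, 1:]) * g = (\<Prod>l\<in>L. [:- l, 1:]) * ([:- z, 1:] * g)"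
        by (simp only: mult_ac)
      then have "poly_calc ((\<Prod>l\<in>insert z L. [:- l, 1:]) * g) h = 0"
        using annih by (simp only:)
      then show ?thesis using L z by (intro exI[of _ "insert z L"]) auto
    qed
  qed
qed

text \<open>The product \<open>g\<close> is carried along only to make the induction on the degree of \<open>p\<close> go
  through; the statement of interest is \<open>g = 1\<close>.\<close>

lemma annihilating_poly_simple_real_roots:
  fixes h :: "'a::cstar_algebra"
  assumes h: "adj h = h"
  shows "p \<noteq> 0 \<Longrightarrow> poly_calc (p * g) h = 0 \<Longrightarrow>
    \<exists>L. finite L \<and> L \<subseteq> \<real> \<and> poly_calc ((\<Prod>l\<in>L. [:- l, 1:]) * g) h = 0"
proof (induction "degree p" arbitrary: p g rule: less_induct)
  case less
  show ?case
  proof (cases "degree p = 0")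
    case True
    then obtain c where "p = [:c:]" "c \<noteq> 0" using less.prems by (metis degree_eq_zeroE pCons_0_0)
    then have "poly_calc g h = 0" using less.prems by (simp add: scaleC_eq_0_iff)
    then show ?thesis by (intro exI[of _ "{}"]) simp
  next
    case False
    then obtain z where "poly p z = 0" using alg_closed_imp_poly_has_root by blast
    then have "[:- z, 1:] dvd p" by (simp add: dvd_iff_poly_eq_0)
    then obtain p' where p: "p = [:- z, 1:] * p'" by (elim dvdE)
    have "p' \<noteq> 0" using less.prems p by auto
    then have "degree p' < degree p" unfolding p by (subst degree_mult_eq) auto
    moreover have "poly_calc (p' * ([:- z, 1:] * g)) h = 0"
      using less.prems(2) by (simp only: p mult_ac)
    ultimately obtain L where "finite L" "L \<subseteq> \<real>"
      and "poly_calc ((\<Prod>l\<in>L. [:- l, 1:]) * ([:- z, 1:] * g)) h = 0"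
      using less.hyps \<open>p' \<noteq> 0\<close> by blast
    then show ?thesis using annihilator_absorb_linear_factor[OF h] by blast
  qed
qed

definition lagrange_basis :: "complex set \<Rightarrow> complex \<Rightarrow> complex poly" where
  "lagrange_basis L l = smult (1 / (\<Prod>m\<in>L - {l}. l - m)) (\<Prod>m\<in>L - {l}. [:- m, 1:])"

lemma poly_lagrange_basis:
  assumes "finite L" "l \<in> L" "m \<in> L"
  shows "poly (lagrange_basis L l) m = (if m = l then 1 else 0)"
  using assms by (auto simp: lagrange_basis_def poly_prod prod_zero_iff)

lemma sum_lagrange_basis:
  assumes L: "finite L" "L \<noteq> {}"
  shows "(\<Sum>l\<in>L. lagrange_basis L l) = 1"
proof (rule poly_eqI_degree[of L])
  fix m assume m: "m \<in> L"
  then show "poly (\<Sum>l\<in>L. lagrange_basis L l) m = poly 1 m"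
    using L by (simp add: poly_sum poly_lagrange_basis sum.delta' cong: sum.cong)
next
  have "degree (lagrange_basis L l) \<le> card L - 1" if "l \<in> L" for l
  proof -
    have "degree (lagrange_basis L l) \<le> degree (\<Prod>m\<in>L - {l}. [:- m, 1::complex:])"
      by (simp add: lagrange_basis_def degree_smult_le)
    also have "\<dots> \<le> (\<Sum>m\<in>L - {l}. degree [:- m, 1::complex:])"
      using degree_prod_sum_le[of "L - {l}" "\<lambda>m. [:- m, 1::complex:]"] L by (simp add: o_def)
    finally show ?thesis using L that by simp
  qed
  then have "degree (\<Sum>l\<in>L. lagrange_basis L l) \<le> card L - 1"
    using L by (intro degree_sum_le) auto
  then show "degree (\<Sum>l\<in>L. lagrange_basis L l) < card L"
    using L by (metis card_gt_0_iff diff_less less_numeral_extra(1) order_le_less_trans)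
  show "degree (1::complex poly) < card L" using L by (simp add: card_gt_0_iff)
qed

lemma real_poly_lagrange_basis: "finite L \<Longrightarrow> L \<subseteq> \<real> \<Longrightarrow> l \<in> L \<Longrightarrow> real_poly (lagrange_basis L l)"
  unfolding lagrange_basis_def
  by (intro real_poly_smult real_poly_prod real_poly_linear Reals_divide prod_in_Reals Reals_diff) auto

text \<open>The spectral projections are the Lagrange basis polynomials on the (real, simple) roots of an
  annihilating polynomial, evaluated at \<open>h\<close>.\<close>

lemma spectral_projections:
  fixes h :: "'a::cstar_algebra"
  assumes h: "adj h = h" and p: "p \<noteq> 0" "poly_calc p h = 0"
  shows "\<exists>L P. finite L \<and> sum P L = 1 \<and>
    (\<forall>l\<in>L. (\<exists>q. P l = poly_calc q h) \<and> projection (P l) \<and> h * P l = scaleC l (P l))"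
proof -
  obtain L where L: "finite L" "L \<subseteq> \<real>" and annih: "poly_calc (\<Prod>l\<in>L. [:- l, 1:]) h = 0"
    using annihilating_poly_simple_real_roots[OF h p(1), of 1] p(2) by auto
  have "L \<noteq> {}" using annih by auto
  define P where "P l = poly_calc (lagrange_basis L l) h" for l
  have eigen: "h * P l = scaleC l (P l)" if l: "l \<in> L" for l
  proof -
    have "[:- l, 1:] * lagrange_basis L l = smult (1 / (\<Prod>m\<in>L - {l}. l - m)) (\<Prod>m\<in>L. [:- m, 1:])"
      using l L by (simp add: lagrange_basis_def prod.remove mult_smult_right)
    then have "(h - scaleC l 1) * P l = 0"
      using annih by (metis P_def poly_calc_linear poly_calc_mult poly_calc_smult scaleC_zero_right)
    then show ?thesis by (simp add: algebra_simps scaleC_mult_left)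
  qed
  have "projection (P l)" if l: "l \<in> L" for l
  proof -
    have "P l * P l = P l"
      using poly_calc_eigenvector[OF eigen[OF l]] L l by (simp add: P_def poly_lagrange_basis scaleC_one)
    moreover have "adj (P l) = P l"
      unfolding P_def by (rule selfadjoint_poly_calc[OF h real_poly_lagrange_basis[OF L l]])
    ultimately show ?thesis by (simp add: projection_def)
  qed
  moreover have "sum P L = 1"
    using sum_lagrange_basis[OF L(1) \<open>L \<noteq> {}\<close>] by (simp add: P_def flip: poly_calc_sum)
  ultimately show ?thesis using L(1) eigen by (auto simp: P_def)
qed

section \<open>Minimal projections of a finite-dimensional subalgebra\<close>

interpretation cvs: vector_space "scaleC :: complex \<Rightarrow> 'a::cstar_algebra \<Rightarrow> 'a"
  by unfold_locales (simp_all add: scaleC_add_right scaleC_add_left scaleC_scaleC scaleC_one)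

lemma cstar_subalgebraD:
  assumes "cstar_subalgebra E"
  shows "0 \<in> E" "x \<in> E \<Longrightarrow> y \<in> E \<Longrightarrow> x + y \<in> E" "x \<in> E \<Longrightarrow> y \<in> E \<Longrightarrow> x * y \<in> E"
    "x \<in> E \<Longrightarrow> scaleC c x \<in> E" "x \<in> E \<Longrightarrow> adj x \<in> E"
  using assms by (auto simp: cstar_subalgebra_def)

lemma cstar_subalgebra_diff:
  assumes "cstar_subalgebra E" "x \<in> E" "y \<in> E"
  shows "x - y \<in> E"
proof -
  have "x + scaleC (-1) y \<in> E" using assms by (intro cstar_subalgebraD(2,4)[OF assms(1)])
  then show ?thesis by (simp add: scaleC_minus_left scaleC_one)
qed

lemma cstar_subalgebra_power: "cstar_subalgebra E \<Longrightarrow> 1 \<in> E \<Longrightarrow> h \<in> E \<Longrightarrow> h ^ k \<in> E"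
  by (induction k) (auto intro: cstar_subalgebraD)

lemma cstar_subalgebra_poly_calc: "cstar_subalgebra E \<Longrightarrow> 1 \<in> E \<Longrightarrow> h \<in> E \<Longrightarrow> poly_calc p h \<in> E"
  by (induction p rule: pCons_induct) (auto intro: cstar_subalgebraD)

lemma finite_dim_independent_bounded:
  assumes "finite_dim E"
  obtains n where "\<And>T. T \<subseteq> E \<Longrightarrow> cvs.independent T \<Longrightarrow> finite T \<and> card T \<le> n"
proof -
  obtain F where F: "finite F" "E \<subseteq> cspan F" using assms by (auto simp: finite_dim_def)
  have "cspan F \<subseteq> cvs.span F"
    by (clarsimp simp: cspan_def) (intro cvs.span_sum cvs.span_scale cvs.span_base)
  then show ?thesis
    using cvs.independent_span_bound[OF F(1)] F(2) that by (meson order_trans)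
qed

lemma finite_dim_annihilating_poly:
  fixes h :: "'a::cstar_algebra"
  assumes E: "cstar_subalgebra E" "1 \<in> E" "finite_dim E" and h: "h \<in> E"
  shows "\<exists>p. p \<noteq> 0 \<and> poly_calc p h = 0"
proof -
  obtain n where bound: "\<And>T. T \<subseteq> E \<Longrightarrow> cvs.independent T \<Longrightarrow> finite T \<and> card T \<le> n"
    using finite_dim_independent_bounded[OF E(3)] by blast
  show ?thesis
  proof (cases "inj_on (\<lambda>k. h ^ k) {..n}")
    case False
    then obtain i j where ij: "i \<noteq> j" "h ^ i = h ^ j" unfolding inj_on_def by auto
    define p where "p = monom 1 j - monom (1::complex) i"
    have "coeff p j = 1" using ij by (simp add: p_def coeff_monom)
    then have "p \<noteq> 0" by auto
    moreover have "poly_calc p h = 0" using ij by (simp add: p_def poly_calc_monom scaleC_one)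
    ultimately show ?thesis by blast
  next
    case True
    define T where "T = (\<lambda>k. h ^ k) ` {..n}"
    have "card T = Suc n" using True by (simp add: T_def card_image)
    moreover have "T \<subseteq> E" using cstar_subalgebra_power[OF E(1,2) h] by (auto simp: T_def)
    ultimately have "cvs.dependent T" using bound[of T] by (metis Suc_n_not_le_n)
    moreover have "finite T" by (simp add: T_def)
    ultimately obtain u where u: "\<exists>v\<in>T. u v \<noteq> 0" and dep: "(\<Sum>v\<in>T. scaleC (u v) v) = 0"
      using cvs.dependent_finite by blast
    define p where "p = (\<Sum>k\<le>n. monom (u (h ^ k)) k)"
    have "poly_calc p h = (\<Sum>v\<in>T. scaleC (u v) v)"
      unfolding T_def by (simp add: p_def poly_calc_sum poly_calc_monom sum.reindex[OF True])
    then have "poly_calc p h = 0" using dep by simp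
    moreover obtain k where k: "k \<le> n" "u (h ^ k) \<noteq> 0" using u by (auto simp: T_def)
    then have "coeff p k \<noteq> 0" by (simp add: p_def coeff_sum coeff_monom)
    then have "p \<noteq> 0" by auto
    ultimately show ?thesis by (intro exI conjI)
  qed
qed

definition proj_partition :: "'a::cstar_algebra set \<Rightarrow> 'a set \<Rightarrow> bool" where
  "proj_partition E Q \<longleftrightarrow> finite Q \<and> Q \<subseteq> E \<and> (\<forall>q\<in>Q. projection q \<and> q \<noteq> 0) \<and>
     (\<forall>q\<in>Q. \<forall>q'\<in>Q. q \<noteq> q' \<longrightarrow> q * q' = 0) \<and> sum id Q = 1"

definition minimal_projection :: "'a::cstar_algebra set \<Rightarrow> 'a \<Rightarrow> bool" where
  "minimal_projection E q \<longleftrightarrow> projection q \<and> q \<noteq> 0 \<and>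
     (\<forall>r\<in>E. projection r \<and> r * q = r \<longrightarrow> r = 0 \<or> r = q)"

lemma proj_partition_independent:
  assumes Q: "proj_partition E Q"
  shows "cvs.independent Q"
proof
  assume "cvs.dependent Q"
  moreover have fin: "finite Q" using Q by (simp add: proj_partition_def)
  ultimately obtain u q where q: "q \<in> Q" "u q \<noteq> 0" and dep: "(\<Sum>v\<in>Q. scaleC (u v) v) = 0"
    using cvs.dependent_finite by blast
  have "0 = (\<Sum>v\<in>Q. scaleC (u v) v) * q" using dep by simp
  also have "\<dots> = (\<Sum>v\<in>Q. scaleC (u v) (v * q))" by (simp add: sum_distrib_right scaleC_mult_left)
  also have "\<dots> = scaleC (u q) (q * q)"
    using Q q by (subst sum.remove[OF fin q(1)]) (auto simp: proj_partition_def intro!: sum.neutral)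
  finally show False using Q q by (auto simp: proj_partition_def projection_def scaleC_eq_0_iff)
qed

lemma proj_partition_refine:
  assumes E: "cstar_subalgebra E" and Q: "proj_partition E Q" and q: "q \<in> Q"
    and r: "r \<in> E" "projection r" "r * q = r" "r \<noteq> 0" "r \<noteq> q"
  defines "Q' \<equiv> insert r (insert (q - r) (Q - {q}))"
  shows "proj_partition E Q' \<and> card Q' = Suc (card Q)"
proof -
  have fin: "finite Q" and QE: "Q \<subseteq> E" and nz: "\<And>x. x \<in> Q \<Longrightarrow> projection x \<and> x \<noteq> 0"
    and orth: "\<And>x y. x \<in> Q \<Longrightarrow> y \<in> Q \<Longrightarrow> x \<noteq> y \<Longrightarrow> x * y = 0" and sum1: "sum id Q = 1"
    using Q by (auto simp: proj_partition_def)
  have qq: "q * q = q" "adj q = q" and rr: "r * r = r" "adj r = r"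
    using nz[OF q] r(2) by (auto simp: projection_def)
  have qr: "q * r = r" using projection_mult_commute nz[OF q] r(2,3) by blast
  have orth_r: "r * (q - r) = 0" "(q - r) * r = 0" using rr qr r(3) by (simp_all add: algebra_simps)
  have proj_qr: "projection (q - r)" "q - r \<noteq> 0"
    using rr qq qr r(3,5) by (simp_all add: projection_def algebra_simps adj_diff)
  have orth_rest: "r * x = 0" "x * r = 0" "(q - r) * x = 0" "x * (q - r) = 0" if x: "x \<in> Q - {q}" for x
  proof -
    have qx: "q * x = 0" "x * q = 0" using x q orth[of q x] orth[of x q] by auto
    show "r * x = 0" "x * r = 0" by (metis qx mult.assoc mult_zero_left mult_zero_right r(3) qr)+
    then show "(q - r) * x = 0" "x * (q - r) = 0" using qx by (simp_all add: algebra_simps)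
  qed
  have new: "r \<notin> Q - {q}" "q - r \<notin> Q - {q}" "r \<noteq> q - r"
    using orth_rest(1)[of r] orth_rest(3)[of "q - r"] orth_r(1) rr(1) r(4) proj_qr
    by (auto simp: projection_def)
  have "card Q > 0" using fin q card_gt_0_iff by blast
  then have "card Q' = Suc (card Q)"
    using new fin q by (simp add: Q'_def)
  moreover have "sum id Q' = 1"
    using new fin sum.remove[OF fin q, of id] sum1 by (simp add: Q'_def)
  moreover have "Q' \<subseteq> E" using QE r(1) cstar_subalgebra_diff[OF E, of q r] q by (auto simp: Q'_def)
  moreover have "x * y = 0" if "x \<in> Q'" "y \<in> Q'" "x \<noteq> y" for x y
    using that orth_rest[of x] orth_rest[of y] orth_r orth[of x y] by (auto simp: Q'_def)
  moreover have "projection x \<and> x \<noteq> 0" if "x \<in> Q'" for x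
    using that nz[of x] r(2,4) proj_qr by (auto simp: Q'_def)
  moreover have "finite Q'" using fin by (simp add: Q'_def)
  ultimately show ?thesis unfolding proj_partition_def by blast
qed

lemma exists_minimal_proj_partition:
  fixes E :: "'a::cstar_algebra set"
  assumes E: "cstar_subalgebra E" "1 \<in> E" "finite_dim E"
  shows "\<exists>Q. proj_partition E Q \<and> (\<forall>q\<in>Q. minimal_projection E q)"
proof -
  obtain n where bound: "\<And>T. T \<subseteq> E \<Longrightarrow> cvs.independent T \<Longrightarrow> finite T \<and> card T \<le> n"
    using finite_dim_independent_bounded[OF E(3)] by blast
  have "proj_partition E {1}" using E by (simp add: proj_partition_def projection_def)
  moreover have "\<forall>Q. proj_partition E Q \<longrightarrow> card Q < Suc n"
    using bound proj_partition_independent by (fastforce simp: proj_partition_def)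
  ultimately obtain Q where Q: "proj_partition E Q"
    and Qmax: "\<forall>Q'. proj_partition E Q' \<longrightarrow> card Q' \<le> card Q"
    using ex_has_greatest_nat[of "proj_partition E" "{1}" card "Suc n"] by blast
  have "minimal_projection E q" if q: "q \<in> Q" for q
  proof -
    have "r = 0 \<or> r = q" if "r \<in> E" "projection r" "r * q = r" for r
      using proj_partition_refine[OF E(1) Q q that] Qmax by (metis Suc_n_not_le_n)
    then show ?thesis using Q q by (auto simp: minimal_projection_def proj_partition_def)
  qed
  then show ?thesis using Q by blast
qed

text \<open>Minimality is detected through the spectral projections of a self-adjoint element of the
  corner \<open>q E q\<close>: they are polynomials in the element, so they lie in \<open>E\<close> and commute with \<open>q\<close>.\<close>

lemma minimal_projection_selfadjoint_corner:
  fixes h q :: "'a::cstar_algebra"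
  assumes E: "cstar_subalgebra E" "1 \<in> E" "finite_dim E"
    and q: "q \<in> E" "minimal_projection E q"
    and h: "h \<in> E" "adj h = h" "q * h = h" "h * q = h"
  shows "\<exists>c. h = scaleC c q"
proof -
  obtain p where "p \<noteq> 0" "poly_calc p h = 0" using finite_dim_annihilating_poly[OF E h(1)] by blast
  then obtain L P where L: "finite L" and sum1: "sum P L = 1"
    and P: "\<And>l. l \<in> L \<Longrightarrow> (\<exists>p. P l = poly_calc p h) \<and> projection (P l) \<and> h * P l = scaleC l (P l)"
    using spectral_projections[OF h(2)] by metis
  have qq: "q * q = q" "adj q = q" "q \<noteq> 0" using q(2) by (auto simp: minimal_projection_def projection_def)
  have comm: "q * P l = P l * q" if "l \<in> L" for l
    using P[OF that] poly_calc_commute[of q h] h by auto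
  have below: "q * P l = 0 \<or> q * P l = q" if l: "l \<in> L" for l
  proof -
    have Pl: "P l * P l = P l" "adj (P l) = P l" "P l \<in> E"
      using P[OF l] cstar_subalgebra_poly_calc[OF E(1,2) h(1)] by (auto simp: projection_def)
    have "projection (q * P l)"
      using Pl qq comm[OF l] by (simp add: projection_def adj_mult mult.assoc) (metis mult.assoc)
    moreover have "q * P l * q = q * P l" using comm[OF l] qq by (simp add: mult.assoc)
    moreover have "q * P l \<in> E" using cstar_subalgebraD(3)[OF E(1) q(1) Pl(3)] .
    ultimately show ?thesis using q(2) unfolding minimal_projection_def by blast
  qed
  have "(\<Sum>l\<in>L. q * P l) = q" using sum1 by (simp flip: sum_distrib_left)
  then obtain l where l: "l \<in> L" "q * P l = q" using below qq(3) by (metis sum.neutral)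
  have "h = (h * P l) * q" using l(2) h comm[OF l(1)] by (metis mult.assoc)
  also have "\<dots> = scaleC l q" using P[OF l(1)] l(2) comm[OF l(1)] by (simp add: scaleC_mult_left)
  finally show ?thesis by blast
qed

lemma minimal_projection_corner:
  fixes a q :: "'a::cstar_algebra"
  assumes E: "cstar_subalgebra E" "1 \<in> E" "finite_dim E"
    and q: "q \<in> E" "minimal_projection E q" and a: "a \<in> E"
  shows "\<exists>c. q * a * q = scaleC c q"
proof -
  have qq: "q * q = q" "adj q = q" using q(2) by (auto simp: minimal_projection_def projection_def)
  define b where "b = q * a * q"
  have bE: "b \<in> E" "adj b \<in> E" using E(1) q(1) a by (simp_all add: b_def cstar_subalgebraD)
  have absorb: "q * (q * x) = q * x" for x using qq by (metis mult.assoc)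
  have qb: "q * b = b" "b * q = b" "q * adj b = adj b" "adj b * q = adj b"
    using qq absorb by (simp_all add: b_def adj_mult mult.assoc)
  define re where "re = scaleC (1/2) (b + adj b)"
  define im where "im = scaleC (- \<i>/2) (b - adj b)"
  have "re \<in> E" unfolding re_def by (rule cstar_subalgebraD(4,2)[OF E(1)] bE)+
  moreover have "im \<in> E"
    unfolding im_def by (rule cstar_subalgebraD(4)[OF E(1) cstar_subalgebra_diff[OF E(1) bE]])
  moreover have "adj re = re" by (simp add: re_def adj_scaleC adj_add adj_adj add.commute)
  moreover have "adj im = im"
    by (simp add: im_def adj_scaleC adj_diff adj_adj flip: scaleC_minus_right)
  moreover have "q * re = re" "re * q = re" "q * im = im" "im * q = im"
    using qb by (simp_all add: re_def im_def scaleC_mult_left scaleC_mult_right algebra_simps)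
  ultimately obtain c1 c2 where "re = scaleC c1 q" "im = scaleC c2 q"
    using minimal_projection_selfadjoint_corner[OF E q] by metis
  moreover have "b = re + scaleC \<i> im"
    by (simp add: re_def im_def scaleC_scaleC scaleC_add_right scaleC_diff_right
        flip: scaleC_add_left)
  ultimately have "q * a * q = scaleC (c1 + \<i> * c2) q"
    by (simp add: b_def scaleC_scaleC scaleC_add_left)
  then show ?thesis ..
qed

text \<open>Positivity of \<open>adj v * v\<close> is not available from the axioms, so the sign of the scalar in
  \<open>minimal_projections_equivalent\<close> is settled algebraically: with \<open>w = z + \<i> e\<close> one gets
  \<open>adj w * w = z * z + e = 0\<close>, hence \<open>z = - \<i> e\<close>, which is self-adjoint only if \<open>e = 0\<close>.\<close>

lemma selfadjoint_square_neg_projection: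
  fixes z e :: "'a::cstar_algebra"
  assumes z: "adj z = z" "z * e = z" "e * z = z" "z * z = - e" and e: "projection e"
  shows "e = 0"
proof -
  have ee: "e * e = e" "adj e = e" using e by (auto simp: projection_def)
  define w where "w = z + scaleC \<i> e"
  have "adj w = z - scaleC \<i> e" using z ee by (simp add: w_def adj_add adj_scaleC scaleC_minus_left)
  then have "adj w * w = (z - scaleC \<i> e) * (z + scaleC \<i> e)" by (simp add: w_def)
  also have "\<dots> = z * z + scaleC \<i> (z * e) - scaleC \<i> (e * z) - scaleC (\<i> * \<i>) (e * e)"
    by (simp add: algebra_simps scaleC_mult_left scaleC_mult_right scaleC_scaleC)
  also have "\<dots> = 0" using z ee by (simp add: scaleC_minus_left scaleC_one)
  finally have "w = 0" by (simp add: adj_mult_self_eq_0_iff)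
  then have zi: "z = - scaleC \<i> e" by (simp add: w_def eq_neg_iff_add_eq_0)
  then have "adj z = scaleC \<i> e" using ee by (simp add: adj_scaleC scaleC_minus_left)
  then have "scaleC \<i> e = - scaleC \<i> e" using z(1) zi by simp
  then have "scaleC \<i> e + scaleC \<i> e = 0" by (metis add.right_inverse)
  then have "scaleC (2 * \<i>) e = 0" by (simp add: scaleC_add_left[symmetric])
  then show ?thesis by (simp add: scaleC_eq_0_iff)
qed

lemma no_negative_partial_isometry:
  fixes q q' y :: "'a::cstar_algebra"
  assumes q: "projection q" "projection q'" "q * q' = 0" "q \<noteq> 0"
    and y: "q * y = y" "y * q' = y" "adj y * y = - q'" "y * adj y = - q"
  shows False
proof -
  have qq: "q * q = q" "adj q = q" "q' * q' = q'" "adj q' = q'" using q by (auto simp: projection_def)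
  have q'q: "q' * q = 0" using arg_cong[OF q(3), of adj] qq by (simp add: adj_mult)
  have yy: "y * y = 0" "y * q = 0" "q' * y = 0" using y(1,2) q'q by (metis mult.assoc mult_zero_left mult_zero_right)+
  have ay: "adj y * adj y = 0" "adj y * q = adj y" "q' * adj y = adj y" "adj y * q' = 0" "q * adj y = 0"
    using arg_cong[OF yy(1), of adj] arg_cong[OF y(1), of adj] arg_cong[OF y(2), of adj]
      arg_cong[OF yy(3), of adj] arg_cong[OF yy(2), of adj] qq
    by (simp_all add: adj_mult)
  define e where "e = q + q'"
  have "projection e" using qq q(3) q'q by (simp add: projection_def e_def adj_add algebra_simps)
  moreover have "adj (y + adj y) = y + adj y" by (simp add: adj_add adj_adj add.commute)
  moreover have "(y + adj y) * e = y + adj y" "e * (y + adj y) = y + adj y"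
    "(y + adj y) * (y + adj y) = - e"
    using y yy ay by (simp_all add: e_def algebra_simps)
  ultimately have "e = 0" by (intro selfadjoint_square_neg_projection)
  then have "q * e = 0" by simp
  then show False using qq q(3,4) by (simp add: e_def algebra_simps)
qed

definition mvn_equiv :: "'a::cstar_algebra set \<Rightarrow> 'a \<Rightarrow> 'a \<Rightarrow> bool" where
  "mvn_equiv E p q \<longleftrightarrow> (\<exists>v\<in>E. adj v * v = p \<and> v * adj v = q)"

lemma mvn_equiv_refl: "projection p \<Longrightarrow> p \<in> E \<Longrightarrow> mvn_equiv E p p"
  unfolding mvn_equiv_def projection_def by (intro bexI[of _ p]) auto

lemma mvn_equiv_sym: "cstar_subalgebra E \<Longrightarrow> mvn_equiv E p q \<Longrightarrow> mvn_equiv E q p"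
  unfolding mvn_equiv_def by (metis adj_adj cstar_subalgebraD(5))

lemma mvn_equiv_trans:
  assumes E: "cstar_subalgebra E" and p: "projection p" and r: "projection r"
    and pq: "mvn_equiv E p q" and qr: "mvn_equiv E q r"
  shows "mvn_equiv E p r"
proof -
  obtain v where v: "v \<in> E" "adj v * v = p" "v * adj v = q" using pq by (auto simp: mvn_equiv_def)
  obtain u where u: "u \<in> E" "adj u * u = q" "u * adj u = r" using qr by (auto simp: mvn_equiv_def)
  have "adj (u * v) * (u * v) = adj v * (adj u * u) * v" by (simp add: adj_mult mult.assoc)
  also have "\<dots> = adj v * (v * adj v) * v" using u(2) v(3) by simp
  also have "\<dots> = (adj v * v) * (adj v * v)" by (simp add: mult.assoc)
  finally have uv1: "adj (u * v) * (u * v) = (adj v * v) * (adj v * v)" .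
  have "(u * v) * adj (u * v) = u * (v * adj v) * adj u" by (simp add: adj_mult mult.assoc)
  also have "\<dots> = u * (adj u * u) * adj u" using u(2) v(3) by simp
  also have "\<dots> = (u * adj u) * (u * adj u)" by (simp add: mult.assoc)
  finally have uv2: "(u * v) * adj (u * v) = (u * adj u) * (u * adj u)" .
  note uv1 uv2
  then show ?thesis
    using u v p r E by (auto simp: mvn_equiv_def projection_def intro!: bexI[of _ "u * v"] cstar_subalgebraD)
qed

lemma partial_isometry_mult_right:
  fixes v p :: "'a::cstar_algebra"
  assumes "adj v * v = p" "projection p"
  shows "v * p = v"
proof -
  have pp: "p * p = p" "adj p = p" using assms(2) by (auto simp: projection_def)
  have "adj (v * p - v) * (v * p - v) = p * (adj v * v) * p - p * (adj v * v) - (adj v * v) * p + adj v * v"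
    using pp by (simp add: adj_diff adj_mult algebra_simps)
  also have "\<dots> = 0" using pp assms(1) by (simp add: mult.assoc)
  finally show ?thesis by (simp add: adj_mult_self_eq_0_iff)
qed

lemma minimal_projection_no_negative_partial_isometry:
  fixes q q' v :: "'a::cstar_algebra"
  assumes E: "cstar_subalgebra E" "1 \<in> E" "finite_dim E"
    and q: "q \<in> E" "minimal_projection E q" and q': "minimal_projection E q'"
    and orth: "q = q' \<or> q * q' = 0" and v: "v \<in> E" "q * v = v" "v * q' = v"
    and neg: "adj v * v = - q'" "v * adj v = - q"
  shows False
proof (cases "q = q'")
  case True
  have qq: "q * q = q" "adj q = q" "q \<noteq> 0" using q(2) by (auto simp: minimal_projection_def projection_def)
  obtain s where "q * v * q = scaleC s q" using minimal_projection_corner[OF E q v(1)] by blast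
  then have "v = scaleC s q" using v True by simp
  then have "scaleC (cnj s * s + 1) q = 0"
    using neg True qq by (simp add: adj_scaleC scaleC_mult_left scaleC_mult_right scaleC_scaleC
      scaleC_add_left scaleC_one)
  moreover have "cnj s * s + 1 = complex_of_real ((cmod s)\<^sup>2 + 1)"
    by (metis complex_norm_square mult.commute of_real_1 of_real_add of_real_power)
  moreover have "(cmod s)\<^sup>2 + 1 \<noteq> 0" using zero_le_power2[of "cmod s"] by linarith
  ultimately show False using qq(3) by (simp add: scaleC_eq_0_iff del: of_real_add)
next
  case False
  then show False
    using no_negative_partial_isometry[OF _ _ _ _ v(2,3) neg] orth q(2) q'
    by (auto simp: minimal_projection_def)
qed

lemma normalize_partial_isometry:
  fixes x q q' :: "'a::cstar_algebra"
  assumes x: "x \<noteq> 0" "q * x = x" "x * q' = x" and q': "q' \<noteq> 0" "adj q' = q'"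
    and xx: "adj x * x = scaleC c q'" and xx': "x * adj x = scaleC c' q"
  shows "\<exists>k \<sigma>. (\<sigma> = 1 \<or> \<sigma> = -1) \<and> adj (scaleR k x) * scaleR k x = scaleR \<sigma> q'
    \<and> scaleR k x * adj (scaleR k x) = scaleR \<sigma> q"
proof -
  have "scaleC c x = scaleC c' x"
    using xx xx' x mult.assoc[of x "adj x" x] by (auto simp: scaleC_mult_left scaleC_mult_right)
  then have "c' = c" using x(1) scaleC_right_imp_eq by metis
  have "scaleC (cnj c) q' = adj (adj x * x)" using xx q' by (simp add: adj_scaleC)
  also have "\<dots> = scaleC c q'" unfolding adj_mult adj_adj by (rule xx)
  finally have "cnj c = c" using q'(1) scaleC_right_imp_eq by blast
  then obtain t where t: "c = complex_of_real t" by (metis Reals_cases Reals_cnj_iff)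
  have "t \<noteq> 0" using xx t x(1) by (auto simp: adj_mult_self_eq_0_iff)
  define k where "k = 1 / sqrt \<bar>t\<bar>"
  have "k * k = 1 / \<bar>t\<bar>" by (simp add: k_def)
  then have "k * k * t = sgn t" using \<open>t \<noteq> 0\<close> by (simp add: sgn_real_def abs_real_def)
  then have "adj (scaleR k x) * scaleR k x = scaleR (sgn t) q'"
    "scaleR k x * adj (scaleR k x) = scaleR (sgn t) q"
    using xx xx' t \<open>c' = c\<close> by (simp_all add: adj_scaleR flip: scaleR_scaleC)
  moreover have "sgn t = 1 \<or> sgn t = -1" using \<open>t \<noteq> 0\<close> by (simp add: sgn_real_def)
  ultimately show ?thesis by blast
qed

lemma minimal_projections_equivalent:
  fixes q q' a :: "'a::cstar_algebra"
  assumes E: "cstar_subalgebra E" "1 \<in> E" "finite_dim E"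
    and q: "q \<in> E" "minimal_projection E q" and q': "q' \<in> E" "minimal_projection E q'"
    and orth: "q = q' \<or> q * q' = 0" and a: "a \<in> E" and nonzero: "q * a * q' \<noteq> 0"
  shows "mvn_equiv E q' q"
proof -
  have qq: "q * q = q" "adj q = q" "q' * q' = q'" "adj q' = q'" "q' \<noteq> 0"
    using q(2) q'(2) by (auto simp: minimal_projection_def projection_def)
  have absorb: "q * (q * y) = q * y" "q' * (q' * y) = q' * y" for y using qq by (metis mult.assoc)+
  define x where "x = q * a * q'"
  have xE: "x \<in> E" using E(1) q(1) q'(1) a by (simp add: x_def cstar_subalgebraD)
  have qx: "q * x = x" "x * q' = x" using qq absorb by (simp_all add: x_def mult.assoc)
  have "adj a * q * a \<in> E" "a * q' * adj a \<in> E" using E(1) a q(1) q'(1) by (simp_all add: cstar_subalgebraD)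
  then obtain c c' where c: "q' * (adj a * q * a) * q' = scaleC c q'"
    and c': "q * (a * q' * adj a) * q = scaleC c' q"
    using minimal_projection_corner[OF E q'] minimal_projection_corner[OF E q] by meson
  have "adj x * x = q' * (adj a * q * a) * q'" using qq absorb by (simp add: x_def adj_mult mult.assoc)
  moreover have "x * adj x = q * (a * q' * adj a) * q" using qq absorb by (simp add: x_def adj_mult mult.assoc)
  moreover have "x \<noteq> 0" using nonzero by (simp add: x_def)
  ultimately obtain k \<sigma> where \<sigma>: "\<sigma> = 1 \<or> \<sigma> = -1"
    and v: "adj (scaleR k x) * scaleR k x = scaleR \<sigma> q'" "scaleR k x * adj (scaleR k x) = scaleR \<sigma> q"
    using normalize_partial_isometry[OF _ qx qq(5,4)] c c' by metis
  have vE: "scaleR k x \<in> E" using xE E(1) by (simp add: scaleR_scaleC cstar_subalgebraD)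
  have vq: "q * scaleR k x = scaleR k x" "scaleR k x * q' = scaleR k x" using qx by simp_all
  from \<sigma> show ?thesis
  proof
    assume "\<sigma> = 1"
    then have "adj (scaleR k x) * scaleR k x = q'" "scaleR k x * adj (scaleR k x) = q" using v by simp_all
    then show ?thesis using vE unfolding mvn_equiv_def by blast
  next
    assume "\<sigma> = -1"
    then have "adj (scaleR k x) * scaleR k x = - q'" "scaleR k x * adj (scaleR k x) = - q" using v by simp_all
    then show ?thesis using minimal_projection_no_negative_partial_isometry[OF E q q'(2) orth vE vq] by blast
  qed
qed

section \<open>Matrix units and the commutant\<close>

text \<open>For equivalent \<open>q, q' \<in> Q\<close>, \<open>w q * adj (w q')\<close> is the matrix unit of \<open>E\<close> from \<open>q'\<close> to \<open>q\<close>: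
  this is the decomposition of \<open>E\<close> into full matrix algebras in disguise.\<close>

locale matrix_units =
  fixes E :: "'a::cstar_algebra set" and Q :: "'a set" and rep :: "'a \<Rightarrow> 'a" and w :: "'a \<Rightarrow> 'a"
  assumes subalgebra: "cstar_subalgebra E" and unit: "1 \<in> E" and fin_dim: "finite_dim E"
    and partition: "proj_partition E Q" and minimal: "\<And>q. q \<in> Q \<Longrightarrow> minimal_projection E q"
    and rep_in: "\<And>q. q \<in> Q \<Longrightarrow> rep q \<in> Q"
    and w_in: "\<And>q. q \<in> Q \<Longrightarrow> w q \<in> E"
    and adj_w_w: "\<And>q. q \<in> Q \<Longrightarrow> adj (w q) * w q = rep q"
    and w_adj_w: "\<And>q. q \<in> Q \<Longrightarrow> w q * adj (w q) = q"
    and rep_eq: "\<And>q q'. q \<in> Q \<Longrightarrow> q' \<in> Q \<Longrightarrow> mvn_equiv E q' q \<Longrightarrow> rep q = rep q'"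
begin

lemma Q_finite: "finite Q" and Q_in: "q \<in> Q \<Longrightarrow> q \<in> E"
  and Q_orth: "q \<in> Q \<Longrightarrow> q' \<in> Q \<Longrightarrow> q \<noteq> q' \<Longrightarrow> q * q' = 0" and Q_sum: "sum id Q = 1"
  using partition by (auto simp: proj_partition_def)

lemma Q_proj: "q \<in> Q \<Longrightarrow> q * q = q" "q \<in> Q \<Longrightarrow> adj q = q"
  using partition by (auto simp: proj_partition_def projection_def)

lemma w_rep: "q \<in> Q \<Longrightarrow> w q * rep q = w q"
  using partial_isometry_mult_right[OF adj_w_w] partition rep_in by (auto simp: proj_partition_def)

lemma Q_w:
  assumes q: "q \<in> Q"
  shows "q * w q = w q"
proof -
  have "(w q * adj (w q)) * w q = w q * (adj (w q) * w q)" by (rule mult.assoc)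
  then show ?thesis using w_adj_w[OF q] adj_w_w[OF q] w_rep[OF q] by simp
qed

lemma rep_adj_w:
  assumes q: "q \<in> Q"
  shows "rep q * adj (w q) = adj (w q)"
  using arg_cong[OF w_rep[OF q], of adj] Q_proj(2)[OF rep_in[OF q]] by (simp add: adj_mult)

lemma adj_w_Q:
  assumes q: "q \<in> Q"
  shows "adj (w q) * q = adj (w q)"
  using arg_cong[OF Q_w[OF q], of adj] Q_proj(2)[OF q] by (simp add: adj_mult)

lemma adj_w_w_orth:
  assumes q: "q \<in> Q" "q' \<in> Q" "q \<noteq> q'"
  shows "adj (w q) * w q' = 0"
proof -
  have "(adj (w q) * q) * (q' * w q') = adj (w q) * (q * q') * w q'" by (simp add: mult.assoc)
  then show ?thesis using adj_w_Q[OF q(1)] Q_w[OF q(2)] Q_orth[OF q] by simp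
qed

lemma norm_w:
  assumes q: "q \<in> Q"
  shows "norm (w q) \<le> 1"
proof -
  have "(norm (w q))\<^sup>2 = norm (rep q)" using cstar_identity[of "w q"] adj_w_w[OF q] by simp
  also have "\<dots> \<le> 1" using norm_projection_le_1 partition rep_in[OF q] by (auto simp: proj_partition_def)
  finally show ?thesis by (simp add: power_le_one_iff)
qed

definition spread :: "('a \<Rightarrow> 'a) \<Rightarrow> 'a" where
  "spread T = (\<Sum>q\<in>Q. w q * T (rep q) * adj (w q))"

lemma spread_cong: "(\<And>r. r \<in> Q \<Longrightarrow> T r = T' r) \<Longrightarrow> spread T = spread T'"
  unfolding spread_def using rep_in by (auto intro!: sum.cong)

lemma spread_diff: "spread T - spread T' = spread (\<lambda>r. T r - T' r)"
  by (simp add: spread_def algebra_simps flip: sum_subtractf)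

lemma adj_spread: "(\<And>r. r \<in> Q \<Longrightarrow> adj (T r) = T r) \<Longrightarrow> adj (spread T) = spread T"
  unfolding spread_def using rep_in by (auto simp: adj_sum adj_mult adj_adj mult.assoc intro!: sum.cong)

lemma spread_id: "spread (\<lambda>r. r) = 1"
proof -
  have "spread (\<lambda>r. r) = (\<Sum>q\<in>Q. w q * adj (w q))"
    unfolding spread_def by (rule sum.cong) (simp_all add: w_rep)
  also have "\<dots> = sum id Q" by (simp add: w_adj_w)
  finally show ?thesis using Q_sum by simp
qed

lemma norm_spread_le:
  fixes \<delta> :: real
  assumes "\<And>r. r \<in> Q \<Longrightarrow> norm (T r) \<le> \<delta>"
  shows "norm (spread T) \<le> card Q * \<delta>"
proof -
  have "norm (w q * T (rep q) * adj (w q)) \<le> \<delta>" if q: "q \<in> Q" for q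
  proof -
    have "norm (w q * T (rep q) * adj (w q)) \<le> norm (w q) * norm (T (rep q)) * norm (adj (w q))"
      by (metis norm_mult_ineq mult_right_mono norm_ge_zero order_trans)
    also have "\<dots> \<le> 1 * \<delta> * 1"
      using norm_w[OF q] assms[OF rep_in[OF q]] order_trans[OF norm_ge_zero assms[OF rep_in[OF q]]]
      by (intro mult_mono) auto
    finally show ?thesis by simp
  qed
  then have "norm (spread T) \<le> (\<Sum>q\<in>Q. \<delta>)"
    unfolding spread_def by (intro order_trans[OF norm_sum sum_mono])
  then show ?thesis by simp
qed

lemma spread_mult_w:
  assumes T: "\<And>r. r \<in> Q \<Longrightarrow> T r * r = T r" and q: "q \<in> Q"
  shows "spread T * w q = w q * T (rep q)"
proof -
  have "spread T * w q = (\<Sum>q1\<in>Q. w q1 * T (rep q1) * (adj (w q1) * w q))"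
    by (simp add: spread_def sum_distrib_right mult.assoc)
  also have "\<dots> = w q * T (rep q) * (adj (w q) * w q)"
    using q adj_w_w_orth by (subst sum.remove[OF Q_finite q]) (auto intro!: sum.neutral)
  finally show ?thesis using T[OF rep_in[OF q]] by (simp add: adj_w_w[OF q] mult.assoc)
qed

lemma adj_w_mult_spread:
  assumes T: "\<And>r. r \<in> Q \<Longrightarrow> r * T r = T r" and q: "q \<in> Q"
  shows "adj (w q) * spread T = T (rep q) * adj (w q)"
proof -
  have orth: "adj (w q) * w q1 = 0" if "q1 \<in> Q - {q}" for q1
    using adj_w_w_orth[of q q1] q that by auto
  have "adj (w q) * spread T = (\<Sum>q1\<in>Q. (adj (w q) * w q1) * T (rep q1) * adj (w q1))"
    by (simp add: spread_def sum_distrib_left mult.assoc)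
  also have "\<dots> = (adj (w q) * w q) * T (rep q) * adj (w q)"
    using orth by (subst sum.remove[OF Q_finite q]) (auto intro!: sum.neutral)
  finally show ?thesis using T[OF rep_in[OF q]] by (simp add: adj_w_w[OF q])
qed

lemma spread_mult:
  assumes T: "\<And>r. r \<in> Q \<Longrightarrow> T r * r = T r"
  shows "spread T * spread T' = spread (\<lambda>r. T r * T' r)"
proof -
  have "spread T * spread T' = (\<Sum>q\<in>Q. (spread T * w q) * T' (rep q) * adj (w q))"
    by (simp add: spread_def[of T'] sum_distrib_left mult.assoc)
  also have "\<dots> = (\<Sum>q\<in>Q. w q * (T (rep q) * T' (rep q)) * adj (w q))"
    by (rule sum.cong) (simp_all add: spread_mult_w[OF T] mult.assoc)
  finally show ?thesis by (simp add: spread_def)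
qed

lemma block_eq_scaleC_matrix_unit:
  assumes q: "q \<in> Q" "q' \<in> Q" and e: "e \<in> E" and nonzero: "q * e * q' \<noteq> 0"
  shows "rep q = rep q' \<and> (\<exists>\<sigma>. q * e * q' = scaleC \<sigma> (w q * adj (w q')))"
proof -
  have "mvn_equiv E q' q"
    using minimal_projections_equivalent[OF subalgebra unit fin_dim Q_in[OF q(1)] minimal[OF q(1)]
        Q_in[OF q(2)] minimal[OF q(2)] _ e nonzero] Q_orth q by blast
  then have same: "rep q = rep q'" using rep_eq q by blast
  define r where "r = rep q"
  have r: "r \<in> Q" using rep_in q by (simp add: r_def)
  define m where "m = adj (w q) * e * w q'"
  have "r * m * r = (rep q * adj (w q)) * e * (w q' * rep q')"
    using same by (simp add: r_def m_def mult.assoc)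
  then have rmr: "r * m * r = m" using rep_adj_w[OF q(1)] w_rep[OF q(2)] by (simp add: m_def)
  have "m \<in> E" using w_in q e subalgebra by (simp add: m_def cstar_subalgebraD)
  then obtain \<sigma> where "r * m * r = scaleC \<sigma> r"
    using minimal_projection_corner[OF subalgebra unit fin_dim Q_in[OF r] minimal[OF r]] by blast
  then have m: "m = scaleC \<sigma> r" using rmr by simp
  have "q * e * q' = (w q * adj (w q)) * e * (w q' * adj (w q'))"
    using w_adj_w q by simp
  also have "\<dots> = w q * m * adj (w q')" by (simp add: m_def mult.assoc)
  also have "\<dots> = scaleC \<sigma> (w q * adj (w q'))"
    using w_rep[OF q(1)] by (simp add: m r_def scaleC_mult_left scaleC_mult_right)
  finally show ?thesis using same by blast
qed

lemma block_decomposition: "e = (\<Sum>q\<in>Q. \<Sum>q'\<in>Q. q * e * q')"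
proof -
  have "e = sum id Q * e * sum id Q" using Q_sum by simp
  also have "\<dots> = (\<Sum>q\<in>Q. q * e) * (\<Sum>q'\<in>Q. q')" by (simp add: sum_distrib_right)
  also have "\<dots> = (\<Sum>q\<in>Q. \<Sum>q'\<in>Q. q * e * q')" by (rule sum_product)
  finally show ?thesis .
qed

lemma spread_commute:
  assumes T: "\<And>r. r \<in> Q \<Longrightarrow> T r * r = T r" "\<And>r. r \<in> Q \<Longrightarrow> r * T r = T r"
    and e: "e \<in> E"
  shows "spread T * e = e * spread T"
proof -
  have block: "spread T * (q * e * q') = (q * e * q') * spread T" if q: "q \<in> Q" "q' \<in> Q" for q q'
  proof (cases "q * e * q' = 0")
    case False
    then obtain \<sigma> where same: "rep q = rep q'" and \<sigma>: "q * e * q' = scaleC \<sigma> (w q * adj (w q'))"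
      using block_eq_scaleC_matrix_unit[OF q e] by blast
    have "spread T * (w q * adj (w q')) = w q * T (rep q) * adj (w q')"
      using spread_mult_w[OF T(1) q(1)] by (simp flip: mult.assoc)
    also have "\<dots> = (w q * adj (w q')) * spread T"
      using adj_w_mult_spread[OF T(2) q(2)] same by (simp add: mult.assoc)
    finally show ?thesis by (simp add: \<sigma> scaleC_mult_left scaleC_mult_right)
  qed simp
  have "spread T * e = (\<Sum>q\<in>Q. \<Sum>q'\<in>Q. spread T * (q * e * q'))"
    by (subst block_decomposition) (simp add: sum_distrib_left)
  also have "\<dots> = (\<Sum>q\<in>Q. \<Sum>q'\<in>Q. (q * e * q') * spread T)"
    using block by simp
  also have "\<dots> = e * spread T"
    by (subst (2) block_decomposition) (simp add: sum_distrib_right)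
  finally show ?thesis .
qed

lemma commutant_eq_spread:
  assumes x: "x \<in> commutant E"
  shows "x = spread (\<lambda>r. r * x * r)"
proof -
  have "x * q = w q * (rep q * x * rep q) * adj (w q)" if q: "q \<in> Q" for q
  proof -
    have "w q * (rep q * x * rep q) * adj (w q) = w q * x * adj (w q)"
      using w_rep[OF q] rep_adj_w[OF q] by (metis mult.assoc)
    also have "\<dots> = x * w q * adj (w q)"
      using x w_in[OF q] unfolding commutant_def by simp
    also have "\<dots> = x * q" using w_adj_w[OF q] by (simp add: mult.assoc)
    finally show ?thesis ..
  qed
  then have "x * sum id Q = spread (\<lambda>r. r * x * r)"
    by (simp add: spread_def sum_distrib_left)
  then show ?thesis using Q_sum by simp
qed

lemma real_rank_zero_commutant:
  assumes rr0: "real_rank_zero (UNIV :: 'a set)"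
  shows "real_rank_zero (UNIV \<inter> commutant E)"
  unfolding real_rank_zero_def
proof (intro ballI impI allI)
  fix x :: 'a and \<epsilon> :: real
  assume x: "x \<in> UNIV \<inter> commutant E" and "adj x = x" and "\<epsilon> > 0"
  define \<delta> where "\<delta> = \<epsilon> / (card Q + 1)"
  have "\<delta> > 0" using \<open>\<epsilon> > 0\<close> by (simp add: \<delta>_def)
  have "\<exists>s s'. adj s = s \<and> r * s = s \<and> s * r = s \<and> r * s' = s' \<and> s' * r = s'
            \<and> s * s' = r \<and> s' * s = r \<and> norm (r * x * r - s) < \<delta>" if r: "r \<in> Q" for r
    using Q_proj[OF r] \<open>adj x = x\<close>
    by (intro corner_real_rank_zero[OF rr0 _ _ _ _ \<open>\<delta> > 0\<close>])
       (simp_all add: projection_def adj_mult mult.assoc flip: mult.assoc[of r r])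
  then obtain S S' where S: "\<And>r. r \<in> Q \<Longrightarrow> adj (S r) = S r \<and> r * S r = S r \<and> S r * r = S r
      \<and> r * S' r = S' r \<and> S' r * r = S' r \<and> S r * S' r = r \<and> S' r * S r = r
      \<and> norm (r * x * r - S r) < \<delta>"
    by metis
  have "spread S * spread S' = 1" "spread S' * spread S = 1"
    using spread_mult[of S S'] spread_mult[of S' S] spread_cong[of "\<lambda>r. S r * S' r" "\<lambda>r. r"]
      spread_cong[of "\<lambda>r. S' r * S r" "\<lambda>r. r"] spread_id S by auto
  moreover have "spread S \<in> commutant E" "spread S' \<in> commutant E"
    using spread_commute S by (auto simp: commutant_def)
  moreover have "adj (spread S) = spread S" using adj_spread S by blast
  moreover have "norm (x - spread S) < \<epsilon>"
  proof -
    have "spread (\<lambda>r. r * x * r) = x" using commutant_eq_spread[of x, symmetric] x by blast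
    then have "x - spread S = spread (\<lambda>r. r * x * r) - spread S" by simp
    then have "norm (x - spread S) = norm (spread (\<lambda>r. r * x * r - S r))" by (simp add: spread_diff)
    also have "\<dots> \<le> card Q * \<delta>" using S by (intro norm_spread_le less_imp_le) auto
    also have "\<dots> < \<epsilon>" using \<open>\<epsilon> > 0\<close> by (simp add: \<delta>_def field_simps)
    finally show ?thesis .
  qed
  ultimately show "\<exists>y\<in>UNIV \<inter> commutant E. adj y = y \<and> (\<exists>z\<in>UNIV \<inter> commutant E. y * z = 1 \<and> z * y = 1)
      \<and> norm (x - y) < \<epsilon>"
    by blast
qed

end

lemma exists_matrix_units:
  fixes E :: "'a::cstar_algebra set"
  assumes E: "cstar_subalgebra E" "1 \<in> E" "finite_dim E"
  shows "\<exists>Q rep w. matrix_units E Q rep w"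
proof -
  obtain Q where Q: "proj_partition E Q" and min: "\<And>q. q \<in> Q \<Longrightarrow> minimal_projection E q"
    using exists_minimal_proj_partition[OF E] by blast
  have proj: "projection q" and QE: "q \<in> E" if "q \<in> Q" for q
    using Q that by (auto simp: proj_partition_def)
  define rep where "rep q = (SOME r. r \<in> Q \<and> mvn_equiv E r q)" for q
  have rep: "rep q \<in> Q \<and> mvn_equiv E (rep q) q" if "q \<in> Q" for q
    unfolding rep_def by (rule someI[of _ q]) (simp add: that mvn_equiv_refl proj QE)
  define w where "w q = (SOME v. v \<in> E \<and> adj v * v = rep q \<and> v * adj v = q)" for q
  have w: "w q \<in> E \<and> adj (w q) * w q = rep q \<and> w q * adj (w q) = q" if "q \<in> Q" for q
  proof -
    have "\<exists>v. v \<in> E \<and> adj v * v = rep q \<and> v * adj v = q"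
      using rep[OF that] unfolding mvn_equiv_def by blast
    then show ?thesis unfolding w_def by (rule someI_ex)
  qed
  have rep_eq: "rep q = rep q'" if q: "q \<in> Q" "q' \<in> Q" and equiv: "mvn_equiv E q' q" for q q'
  proof -
    have "mvn_equiv E r q \<longleftrightarrow> mvn_equiv E r q'" if "r \<in> Q" for r
      using mvn_equiv_trans[OF E(1) proj[OF that] proj[OF q(2)], of q]
        mvn_equiv_trans[OF E(1) proj[OF that] proj[OF q(1)], of q'] mvn_equiv_sym[OF E(1) equiv] equiv
      by blast
    then have "(\<lambda>r. r \<in> Q \<and> mvn_equiv E r q) = (\<lambda>r. r \<in> Q \<and> mvn_equiv E r q')" by auto
    then show ?thesis by (simp add: rep_def)
  qed
  have "matrix_units E Q rep w"
    by unfold_locales (use E Q min rep w rep_eq in blast)+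
  then show ?thesis by blast
qed

theorem lemma5p1:
  fixes E :: "'a::cstar_algebra set"
  assumes "real_rank_zero (UNIV :: 'a set)"
    and "cstar_subalgebra E"
    and "finite_dim E"
    and "1 \<in> E"
  shows "real_rank_zero (UNIV \<inter> commutant E)"
proof -
  obtain Q rep w where "matrix_units E Q rep w"
    using exists_matrix_units assms(2-4) by blast
  then show ?thesis using matrix_units.real_rank_zero_commutant assms(1) by blast
qed

end
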